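(* Let $S\subseteq S_n$ be a sharply transitive set of permutations and let $L$ be the latin square whose rows are the permutations in $S$ (row corresponding to $\sigma\in S$ having entry $\sigma(i)$ in column $i$). Then $\mathrm{cr}(S)\le n-1$, with equality if and only if $L$ has a transversal.
   Context: $S_n$ is the symmetric group on $\{1,\dots,n\}$ with the Hamming distance: the distance between $g,h\in S_n$ is the number of points $i$ with $g(i)\ne h(i)$. The covering radius $\mathrm{cr}(P)$ of a nonempty $P\subseteq S_n$ is the smallest $r$ such that every permutation in $S_n$ is at distance at most $r$ from some element of $P$. A set $S\subseteq S_n$ is sharply transitive if for all $i,j\in\{1,\dots,n\}$ there is exactly one $\sigma\in S$ with $\sigma(i)=j$; its permutations then form the rows of a latin square of order $n$. A transversal of a latin square of order $n$ is a set of $n$ cells, one from each row and one from each column, no two containing the same symbol. *)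

theory Defs
  imports "HOL-Combinatorics.Permutations"
begin

definition Sym :: "nat \<Rightarrow> (nat \<Rightarrow> nat) set" where
  "Sym n = {\<sigma>. \<sigma> permutes {1..n}}"

definition hamming :: "nat \<Rightarrow> (nat \<Rightarrow> nat) \<Rightarrow> (nat \<Rightarrow> nat) \<Rightarrow> nat" where
  "hamming n g h = card {i \<in> {1..n}. g i \<noteq> h i}"

definition covering_radius :: "nat \<Rightarrow> (nat \<Rightarrow> nat) set \<Rightarrow> nat" where
  "covering_radius n P = (LEAST r. \<forall>g\<in>Sym n. \<exists>p\<in>P. hamming n g p \<le> r)"

definition sharply_transitive :: "nat \<Rightarrow> (nat \<Rightarrow> nat) set \<Rightarrow> bool" where
  "sharply_transitive n S \<longleftrightarrow> (\<forall>i\<in>{1..n}. \<forall>j\<in>{1..n}. \<exists>!\<sigma>. \<sigma> \<in> S \<and> \<sigma> i = j)"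

text \<open>The latin square L with rows indexed by \<sigma> \<in> S, columns i \<in> {1..n}, and entry
  \<sigma> i in cell (\<sigma>, i).\<close>
definition has_transversal :: "nat \<Rightarrow> (nat \<Rightarrow> nat) set \<Rightarrow> bool" where
  "has_transversal n S \<longleftrightarrow>
     (\<exists>T. T \<subseteq> S \<times> {1..n} \<and> card T = n \<and>
          (\<forall>\<sigma>\<in>S. \<exists>!i. (\<sigma>, i) \<in> T) \<and>
          (\<forall>i\<in>{1..n}. \<exists>!\<sigma>. (\<sigma>, i) \<in> T) \<and>
          inj_on (\<lambda>(\<sigma>, i). \<sigma> i) T)"

end

theory Submission
  imports Defs
begin

(* Write agreements n g p for the number of
   points of {1..n} where g and p agree, so that hamming n g p = n - agreements n g p.
   If S is sharply transitive, every point i is matched by exactly one row, hence for every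
   permutation g the agreements with the rows of S sum to n; in particular g agrees with some
   row somewhere, which gives cr(S) <= n - 1.  General facts about the LEAST in the definition
   of the covering radius then show cr(S) = n - 1 iff some permutation g agrees with every
   row at most once.  Since |S| = n and the agreements sum to n, such a g agrees with every
   row exactly once, and the cells where g agrees with the rows form a transversal (g is
   its column-to-symbol map).  Conversely, reading off the symbol of the transversal cell in
   every column yields such a permutation. *)

lemma card_filter_sum: "finite I \<Longrightarrow> card {i \<in> I. P i} = (\<Sum>i\<in>I. if P i then 1 else 0)"
  using sum.inter_filter[of I "\<lambda>_. 1::nat" P] by simp

lemma sum_le_one_eq_card:
  fixes f :: "'a \<Rightarrow> nat"
  assumes "finite A" "\<forall>x\<in>A. f x \<le> 1" "sum f A = card A" "a \<in> A"
  shows "f a = 1"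
proof (rule ccontr)
  assume "f a \<noteq> 1"
  then have zero: "f a = 0" using assms(2,4) by (metis le_antisym less_one not_le)
  have "sum f A = f a + sum f (A - {a})" using assms(1,4) by (rule sum.remove)
  also have "\<dots> \<le> (\<Sum>x\<in>A - {a}. 1)"
    using zero assms(2) sum_mono[of "A - {a}" f "\<lambda>_. 1"] by simp
  also have "\<dots> < card A"
    using card_Diff1_less[OF assms(1,4)] by simp
  finally show False using assms(3) by simp
qed

definition agreements :: "nat \<Rightarrow> (nat \<Rightarrow> nat) \<Rightarrow> (nat \<Rightarrow> nat) \<Rightarrow> nat" where
  "agreements n g p = card {i \<in> {1..n}. g i = p i}"

lemma hamming_agreements: "hamming n g p = n - agreements n g p"
proof -
  have split: "{1..n} = {i \<in> {1..n}. g i \<noteq> p i} \<union> {i \<in> {1..n}. g i = p i}" by auto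
  have "card {1..n} = card {i \<in> {1..n}. g i \<noteq> p i} + card {i \<in> {1..n}. g i = p i}"
    by (subst split, rule card_Un_disjoint) auto
  then show ?thesis unfolding hamming_def agreements_def by simp
qed

lemma agreements_le: "agreements n g p \<le> n"
proof -
  have "agreements n g p \<le> card {1..n}" unfolding agreements_def by (rule card_mono) auto
  then show ?thesis by simp
qed

lemma Sym_finite: "S \<subseteq> Sym n \<Longrightarrow> finite S"
  unfolding Sym_def by (rule finite_subset, assumption, rule finite_permutations) simp

lemma Sym_closed: "\<sigma> \<in> Sym n \<Longrightarrow> i \<in> {1..n} \<Longrightarrow> \<sigma> i \<in> {1..n}"
  unfolding Sym_def by (metis mem_Collect_eq permutes_in_image)

lemma sharply_transitive_exists:
  assumes "sharply_transitive n S" "i \<in> {1..n}" "j \<in> {1..n}"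
  obtains \<sigma> where "\<sigma> \<in> S" "\<sigma> i = j"
  using assms unfolding sharply_transitive_def by blast

lemma sharply_transitive_unique:
  assumes "sharply_transitive n S" "i \<in> {1..n}" "\<sigma> \<in> S" "\<tau> \<in> S" "\<sigma> i = \<tau> i"
    and "\<sigma> i \<in> {1..n}"
  shows "\<sigma> = \<tau>"
  using assms unfolding sharply_transitive_def by metis

(* Exactly one row passes through each cell of a column, so a sharply transitive set has
   exactly n rows; this is what makes the agreement count below tight. *)
lemma card_sharply_transitive:
  assumes "n \<ge> 1" "S \<subseteq> Sym n" "sharply_transitive n S"
  shows "card S = n"
proof -
  have one: "1 \<in> {1..n}" using assms(1) by simp
  have "bij_betw (\<lambda>\<sigma>. \<sigma> 1) S {1..n}"
  proof (rule bij_betwI')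
    fix \<sigma> \<tau> assume "\<sigma> \<in> S" "\<tau> \<in> S"
    then show "(\<sigma> 1 = \<tau> 1) = (\<sigma> = \<tau>)"
      using sharply_transitive_unique[OF assms(3) one] Sym_closed[OF _ one] assms(2) by blast
  next
    fix \<sigma> assume "\<sigma> \<in> S" then show "\<sigma> 1 \<in> {1..n}" using Sym_closed[OF _ one] assms(2) by blast
  next
    fix j assume "j \<in> {1..n}"
    then show "\<exists>\<sigma>\<in>S. j = \<sigma> 1" by (metis sharply_transitive_exists[OF assms(3) one])
  qed
  then show ?thesis by (simp add: bij_betw_same_card)
qed

(* Double counting: each point i contributes exactly one agreement, namely with the unique
   row sending i to g i. *)
lemma sum_agreements:
  assumes "S \<subseteq> Sym n" "sharply_transitive n S" and g: "\<And>i. i \<in> {1..n} \<Longrightarrow> g i \<in> {1..n}"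
  shows "(\<Sum>\<sigma>\<in>S. agreements n g \<sigma>) = n"
proof -
  have finS: "finite S" using assms(1) by (rule Sym_finite)
  have column: "card {\<sigma> \<in> S. g i = \<sigma> i} = 1" if i: "i \<in> {1..n}" for i
  proof -
    obtain s where s: "s \<in> S" "s i = g i"
      using sharply_transitive_exists[OF assms(2) i g[OF i]] .
    have "{\<sigma> \<in> S. g i = \<sigma> i} = {s}"
      using s sharply_transitive_unique[OF assms(2) i] g[OF i] by auto
    then show ?thesis by simp
  qed
  have "(\<Sum>\<sigma>\<in>S. agreements n g \<sigma>) = (\<Sum>\<sigma>\<in>S. \<Sum>i\<in>{1..n}. if g i = \<sigma> i then 1 else 0)"
    unfolding agreements_def by (rule sum.cong[OF refl], rule card_filter_sum) simp
  also have "\<dots> = (\<Sum>i\<in>{1..n}. \<Sum>\<sigma>\<in>S. if g i = \<sigma> i then 1 else 0)"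
    by (rule sum.swap)
  also have "\<dots> = (\<Sum>i\<in>{1..n}. card {\<sigma> \<in> S. g i = \<sigma> i})"
    by (rule sum.cong[OF refl], rule card_filter_sum[OF finS, symmetric])
  also have "\<dots> = n" using column by simp
  finally show ?thesis .
qed

section \<open>The covering radius\<close>

lemma covering_radius_le:
  assumes "\<forall>g\<in>Sym n. \<exists>p\<in>P. hamming n g p \<le> r"
  shows "covering_radius n P \<le> r"
  unfolding covering_radius_def using assms by (rule Least_le)

lemma covering_radius_covers:
  assumes "\<forall>g\<in>Sym n. \<exists>p\<in>P. hamming n g p \<le> r" "g \<in> Sym n"
  shows "\<exists>p\<in>P. hamming n g p \<le> covering_radius n P"
  using LeastI[of "\<lambda>r. \<forall>g\<in>Sym n. \<exists>p\<in>P. hamming n g p \<le> r", OF assms(1)] assms(2)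
  unfolding covering_radius_def by blast

lemma below_covering_radius:
  assumes "r < covering_radius n P"
  obtains g where "g \<in> Sym n" "\<forall>p\<in>P. r < hamming n g p"
  using not_less_Least[OF assms[unfolded covering_radius_def]] by (auto simp: not_le)

lemma covering_radius_eq_iff:
  assumes "n \<ge> 1" and cover: "\<forall>g\<in>Sym n. \<exists>p\<in>P. hamming n g p \<le> n - 1"
  shows "covering_radius n P = n - 1 \<longleftrightarrow> (\<exists>g\<in>Sym n. \<forall>p\<in>P. agreements n g p \<le> 1)"
proof
  assume eq: "covering_radius n P = n - 1"
  show "\<exists>g\<in>Sym n. \<forall>p\<in>P. agreements n g p \<le> 1"
  proof (cases "n = 1")
    case True
    have "id \<in> Sym n" unfolding Sym_def by simp
    then show ?thesis using agreements_le[of n] True by blast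
  next
    case False
    then have "n - 2 < covering_radius n P" using eq assms(1) by simp
    then obtain g where g: "g \<in> Sym n" and far: "\<forall>p\<in>P. n - 2 < hamming n g p"
      by (rule below_covering_radius)
    have "\<forall>p\<in>P. agreements n g p \<le> 1"
      using far by (auto simp: hamming_agreements)
    with g show ?thesis by blast
  qed
next
  assume "\<exists>g\<in>Sym n. \<forall>p\<in>P. agreements n g p \<le> 1"
  then obtain g where g: "g \<in> Sym n" and once: "\<forall>p\<in>P. agreements n g p \<le> 1" by blast
  obtain p where "p \<in> P" "hamming n g p \<le> covering_radius n P"
    using covering_radius_covers[OF cover g] by blast
  with once have "n - 1 \<le> covering_radius n P" by (auto simp: hamming_agreements)
  with covering_radius_le[OF cover] show "covering_radius n P = n - 1" by simp
qed

(* Every permutation agrees somewhere with some row of a sharply transitive set, since its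
   agreements with the rows add up to n >= 1; hence S_n is covered within radius n - 1. *)
lemma sharply_transitive_covers:
  assumes "n \<ge> 1" "S \<subseteq> Sym n" "sharply_transitive n S"
  shows "\<forall>g\<in>Sym n. \<exists>\<sigma>\<in>S. hamming n g \<sigma> \<le> n - 1"
proof
  fix g assume g: "g \<in> Sym n"
  have "(\<Sum>\<sigma>\<in>S. agreements n g \<sigma>) = n"
    using sum_agreements[OF assms(2,3)] Sym_closed[OF g] by blast
  then obtain \<sigma> where "\<sigma> \<in> S" "agreements n g \<sigma> \<noteq> 0"
    using assms(1) by (metis not_one_le_zero sum.neutral)
  then have "hamming n g \<sigma> \<le> n - 1" by (simp add: hamming_agreements)
  with \<open>\<sigma> \<in> S\<close> show "\<exists>\<sigma>\<in>S. hamming n g \<sigma> \<le> n - 1" by blast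
qed

section \<open>Transversals as permutations\<close>

definition agreement_cells :: "nat \<Rightarrow> (nat \<Rightarrow> nat) set \<Rightarrow> (nat \<Rightarrow> nat) \<Rightarrow> ((nat \<Rightarrow> nat) \<times> nat) set"
  where "agreement_cells n S g = {(\<sigma>, i). \<sigma> \<in> S \<and> i \<in> {1..n} \<and> \<sigma> i = g i}"

lemma mem_agreement_cells:
  "(\<sigma>, i) \<in> agreement_cells n S g \<longleftrightarrow> \<sigma> \<in> S \<and> i \<in> {1..n} \<and> \<sigma> i = g i"
  unfolding agreement_cells_def by simp

(* For a permutation g, each column contains exactly one agreement cell: the cell of the
   unique row sending i to g i. *)
lemma agreement_cells_column:
  assumes "sharply_transitive n S" "g \<in> Sym n" and i: "i \<in> {1..n}"
  shows "\<exists>!\<sigma>. (\<sigma>, i) \<in> agreement_cells n S g"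
proof -
  have gi: "g i \<in> {1..n}" using Sym_closed[OF assms(2) i] .
  obtain s where s: "s \<in> S" "s i = g i" using sharply_transitive_exists[OF assms(1) i gi] .
  show ?thesis
  proof (rule ex1I[of _ s])
    show "(s, i) \<in> agreement_cells n S g" using s i by (simp add: mem_agreement_cells)
  next
    fix t assume "(t, i) \<in> agreement_cells n S g"
    then have "t \<in> S" "t i = g i" by (simp_all add: mem_agreement_cells)
    then show "t = s" using sharply_transitive_unique[OF assms(1) i] s gi by simp
  qed
qed

lemma agreement_cells_row:
  assumes "\<sigma> \<in> S" "agreements n g \<sigma> = 1"
  shows "\<exists>!i. (\<sigma>, i) \<in> agreement_cells n S g"
proof -
  obtain i0 where i0: "{i \<in> {1..n}. g i = \<sigma> i} = {i0}"
    using assms(2) unfolding agreements_def by (metis card_1_singletonE)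
  have "(\<sigma>, i) \<in> agreement_cells n S g \<longleftrightarrow> i \<in> {i \<in> {1..n}. g i = \<sigma> i}" for i
    using assms(1) unfolding mem_agreement_cells by auto
  then have "(\<sigma>, i) \<in> agreement_cells n S g \<longleftrightarrow> i = i0" for i
    unfolding i0 by simp
  then show ?thesis by simp
qed

(* A permutation agreeing with every row exactly once yields a transversal: its agreement
   cells.  Columns are covered once by sharp transitivity, symbols are distinct because the
   permutation is injective. *)
lemma transversal_of_permutation:
  assumes "sharply_transitive n S" "g \<in> Sym n"
    and once: "\<forall>\<sigma>\<in>S. agreements n g \<sigma> = 1"
  shows "has_transversal n S"
proof -
  let ?T = "agreement_cells n S g"
  have col: "\<forall>i\<in>{1..n}. \<exists>!\<sigma>. (\<sigma>, i) \<in> ?T"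
    using agreement_cells_column[OF assms(1,2)] by blast
  have same_row: "s = t" if "(s, i) \<in> ?T" "(t, i) \<in> ?T" for s t i
  proof -
    have "i \<in> {1..n}" using that(1) by (simp add: mem_agreement_cells)
    then show ?thesis using col that by blast
  qed
  have row: "\<forall>\<sigma>\<in>S. \<exists>!i. (\<sigma>, i) \<in> ?T" using agreement_cells_row once by blast
  have ginj: "inj_on g {1..n}"
    using assms(2) unfolding Sym_def by (simp add: permutes_inj_on)
  have symbols: "inj_on (\<lambda>(\<sigma>, i). \<sigma> i) ?T"
  proof (rule inj_onI, clarify)
    fix s i t j assume st: "(s, i) \<in> ?T" "(t, j) \<in> ?T" "s i = t j"
    then have "g i = g j" "i \<in> {1..n}" "j \<in> {1..n}" unfolding mem_agreement_cells by auto
    then have "i = j" using ginj by (simp add: inj_on_eq_iff)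
    with st same_row show "s = t \<and> i = j" by blast
  qed
  have "bij_betw snd ?T {1..n}"
  proof (rule bij_betw_imageI)
    show "inj_on snd ?T"
      using same_row by (intro inj_onI) auto
    show "snd ` ?T = {1..n}"
    proof
      show "snd ` ?T \<subseteq> {1..n}" unfolding agreement_cells_def by auto
      show "{1..n} \<subseteq> snd ` ?T"
      proof
        fix i assume "i \<in> {1..n}"
        then obtain \<sigma> where "(\<sigma>, i) \<in> ?T" using col by blast
        then show "i \<in> snd ` ?T" by (rule rev_image_eqI) simp
      qed
    qed
  qed
  then have "card ?T = n" by (simp add: bij_betw_same_card)
  moreover have "?T \<subseteq> S \<times> {1..n}" unfolding agreement_cells_def by auto
  ultimately show ?thesis
    unfolding has_transversal_def using row col symbols by (intro exI[of _ ?T]) simp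
qed

(* Choosing in every column i a cell (c i, i) of a transversal, the symbols c i i form a
   permutation of {1..n}, since the symbols of a transversal are distinct. *)
lemma transversal_symbols_permutation:
  assumes "S \<subseteq> Sym n" "T \<subseteq> S \<times> {1..n}" "inj_on (\<lambda>(\<sigma>, i). \<sigma> i) T"
    and cT: "\<And>i. i \<in> {1..n} \<Longrightarrow> (c i, i) \<in> T"
  shows "(\<lambda>i. if i \<in> {1..n} then c i i else i) \<in> Sym n"
proof -
  define g where "g i = (if i \<in> {1..n} then c i i else i)" for i
  have g_closed: "g i \<in> {1..n}" if i: "i \<in> {1..n}" for i
  proof -
    have "c i \<in> Sym n" using cT[OF i] assms(1,2) by blast
    then show ?thesis using Sym_closed i unfolding g_def by simp
  qed
  have g_inj: "inj_on g {1..n}"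
  proof (rule inj_onI)
    fix i j assume i: "i \<in> {1..n}" and j: "j \<in> {1..n}" and eq: "g i = g j"
    have "(\<lambda>(\<sigma>, i). \<sigma> i) (c i, i) = (\<lambda>(\<sigma>, i). \<sigma> i) (c j, j)"
      using eq i j unfolding g_def by simp
    then have "(c i, i) = (c j, j)" by (rule inj_onD[OF assms(3) _ cT[OF i] cT[OF j]])
    then show "i = j" by simp
  qed
  have "g permutes {1..n}"
  proof (rule bij_imp_permutes)
    have "g ` {1..n} = {1..n}"
      using g_inj g_closed by (intro endo_inj_surj) auto
    then show "bij_betw g {1..n} {1..n}" using g_inj by (simp add: bij_betw_def)
  qed (auto simp: g_def)
  then show ?thesis unfolding Sym_def g_def by simp
qed

(* Conversely, the permutation reading off the symbol of the transversal cell in every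
   column agrees with a row at most once, namely in that row's transversal cell. *)
lemma permutation_of_transversal:
  assumes "S \<subseteq> Sym n" "sharply_transitive n S" "has_transversal n S"
  shows "\<exists>g\<in>Sym n. \<forall>\<sigma>\<in>S. agreements n g \<sigma> \<le> 1"
proof -
  obtain T where Tsub: "T \<subseteq> S \<times> {1..n}"
    and row: "\<forall>\<sigma>\<in>S. \<exists>!i. (\<sigma>, i) \<in> T"
    and col: "\<forall>i\<in>{1..n}. \<exists>!\<sigma>. (\<sigma>, i) \<in> T"
    and symbols: "inj_on (\<lambda>(\<sigma>, i). \<sigma> i) T"
    using assms(3) unfolding has_transversal_def by blast
  define c where "c i = (THE \<sigma>. (\<sigma>, i) \<in> T)" for i
  have cT: "(c i, i) \<in> T" if "i \<in> {1..n}" for i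
  proof -
    have "\<exists>!\<sigma>. (\<sigma>, i) \<in> T" using col that by blast
    then show ?thesis unfolding c_def by (rule theI')
  qed
  have cS: "c i \<in> S" if "i \<in> {1..n}" for i using cT[OF that] Tsub by blast
  define g where "g i = (if i \<in> {1..n} then c i i else i)" for i
  have gS: "g \<in> Sym n"
    unfolding g_def using transversal_symbols_permutation[OF assms(1) Tsub symbols cT] .
  have "agreements n g \<sigma> \<le> 1" if \<sigma>: "\<sigma> \<in> S" for \<sigma>
  proof -
    obtain i0 where i0: "(\<sigma>, i0) \<in> T" using row \<sigma> by blast
    have "{i \<in> {1..n}. g i = \<sigma> i} \<subseteq> {i0}"
    proof
      fix j assume "j \<in> {i \<in> {1..n}. g i = \<sigma> i}"
      then have j: "j \<in> {1..n}" and agree: "c j j = \<sigma> j" unfolding g_def by auto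
      have "\<sigma> j \<in> {1..n}" using Sym_closed \<sigma> j assms(1) by blast
      then have "\<sigma> = c j"
        using sharply_transitive_unique[OF assms(2) j \<sigma> cS[OF j]] agree by simp
      then have "(\<sigma>, j) \<in> T" using cT[OF j] by simp
      then show "j \<in> {i0}" using row \<sigma> i0 by blast
    qed
    then have "card {i \<in> {1..n}. g i = \<sigma> i} \<le> card {i0}" by (intro card_mono) auto
    then show ?thesis unfolding agreements_def by simp
  qed
  with gS show ?thesis by blast
qed

(* A permutation meeting every row of a sharply transitive set at most once meets every
   row exactly once: the n rows share exactly n agreements. *)
lemma agreements_exactly_once:
  assumes "n \<ge> 1" "S \<subseteq> Sym n" "sharply_transitive n S" "g \<in> Sym n"
    and once: "\<forall>\<sigma>\<in>S. agreements n g \<sigma> \<le> 1"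
  shows "\<forall>\<sigma>\<in>S. agreements n g \<sigma> = 1"
proof -
  have "(\<Sum>\<sigma>\<in>S. agreements n g \<sigma>) = card S"
    using sum_agreements[OF assms(2,3)] Sym_closed[OF assms(4)]
      card_sharply_transitive[OF assms(1-3)] by simp
  then show ?thesis using sum_le_one_eq_card[OF Sym_finite[OF assms(2)] once] by blast
qed

lemma has_transversal_iff:
  assumes "n \<ge> 1" "S \<subseteq> Sym n" "sharply_transitive n S"
  shows "has_transversal n S \<longleftrightarrow> (\<exists>g\<in>Sym n. \<forall>\<sigma>\<in>S. agreements n g \<sigma> \<le> 1)"
proof
  assume "\<exists>g\<in>Sym n. \<forall>\<sigma>\<in>S. agreements n g \<sigma> \<le> 1"
  then obtain g where "g \<in> Sym n" "\<forall>\<sigma>\<in>S. agreements n g \<sigma> \<le> 1" by blast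
  with agreements_exactly_once[OF assms] show "has_transversal n S"
    by (intro transversal_of_permutation[OF assms(3)]) auto
qed (rule permutation_of_transversal[OF assms(2,3)])

theorem theorem6p2:
  fixes n :: nat and S :: "(nat \<Rightarrow> nat) set"
  assumes "n \<ge> 1"
    and "S \<subseteq> Sym n"
    and "sharply_transitive n S"
  shows "covering_radius n S \<le> n - 1 \<and>
         (covering_radius n S = n - 1 \<longleftrightarrow> has_transversal n S)"
proof -
  have cover: "\<forall>g\<in>Sym n. \<exists>\<sigma>\<in>S. hamming n g \<sigma> \<le> n - 1"
    by (rule sharply_transitive_covers[OF assms])
  have "covering_radius n S = n - 1 \<longleftrightarrow> (\<exists>g\<in>Sym n. \<forall>\<sigma>\<in>S. agreements n g \<sigma> \<le> 1)"
    by (rule covering_radius_eq_iff[OF assms(1) cover])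
  then show ?thesis
    using covering_radius_le[OF cover] has_transversal_iff[OF assms] by blast
qed

end
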